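(* Let $E$ be a countable subset of $2^{\mathfrak c}$, let $\emptyset\neq I\subseteq E$, and let $F\subseteq E$ be finite. For each $\xi\in I$ let $k_\xi\in\omega$, let $\{p_\xi:\xi\in I\}$ be a family of pairwise Rudin–Keisler incomparable selective ultrafilters, let $g_\xi:\omega\to([E]^{<\omega})^{k_\xi}$ be a function such that the family $\{g^j_\xi(m):j<k_\xi,\ m\in\omega\}$ is linearly independent, and let $d_\xi\in([E]^{<\omega})^{k_\xi}$. Let also $\{y_n:n\in\omega\}\subseteq E$ be a faithfully indexed (injective) sequence. Then there exist a strictly increasing sequence $\{b_i:i\in\omega\}\subseteq\omega$, a surjective function $r:\omega\to I$ and a sequence $\{E_i:i\in\omega\}$ of finite subsets of $E$ such that: (a) $F\subseteq E_0$; (b) $E=\bigcup_{i\in\omega}E_i$; (c) $r(m)\in E_m$ for each $m\in\omega$; (d) $\bigcup\{d^j_{r(m)}:j<k_{r(m)}\}\subseteq E_m$ for each $m\in\omega$; (e) $E_{m+1}\supseteq \bigcup\{g^j_\xi(b_m):\xi\in E_m\cap I,\ j<k_\xi\}\cup E_m$ for each $m\in\omega$; (f) $\{g^j_{r(m)}(b_m):j<k_{r(m)}\}\cup\{\{\mu\}:\mu\in E_m\}$ is linearly independent for each $m\in\omega$; (g) $\{b_i:i\in r^{-1}(\xi)\}\in p_\xi$ for every $\xi\in I$; (h) there is a strictly increasing sequence $(N_i)_{i\in\omega}$ of natural numbers such that $\{n\in\omega:y_n\in E_i\}=\{0,1,\dots,2N_i-1\}$ for each $i\in\omega$.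
   Context: $\mathfrak c$ is the cardinality of the continuum and $2^{\mathfrak c}$ is regarded as a set of ordinals. $[E]^{<\omega}$ is the set of finite subsets of $E$, a vector space over the field $2=\{0,1\}$ under symmetric difference; linear independence refers to this structure (for indexed families, so members are distinct). For a tuple $g\in([E]^{<\omega})^k$, $g^j$ denotes its $j$-th coordinate. Selective ultrafilter: a free ultrafilter $p$ on $\omega$ such that for every partition $\{A_n\}$ of $\omega$ either some $A_n\in p$ or some $B\in p$ meets each $A_n$ in exactly one point. Rudin–Keisler order: $p\le_{RK}q$ iff $p=\{A: f^{-1}(A)\in q\}$ for some $f:\omega\to\omega$; incomparable means neither $p\le_{RK}q$ nor $q\le_{RK}p$. *)

theory Defs
  imports Main "HOL-Library.Countable_Set"
begin

text \<open>Sum in the vector space of finite sets over the field 2 (symmetric difference):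
  the sum of the members f j, j in S, consists of the points lying in an odd number of them.\<close>
definition symdiff_sum :: "'j set \<Rightarrow> ('j \<Rightarrow> 'a set) \<Rightarrow> 'a set" where
  "symdiff_sum S f = {x. odd (card {j \<in> S. x \<in> f j})}"

definition lin_indep :: "'j set \<Rightarrow> ('j \<Rightarrow> 'a set) \<Rightarrow> bool" where
  "lin_indep J f \<longleftrightarrow> inj_on f J \<and>
     (\<forall>S. S \<subseteq> J \<and> finite S \<and> S \<noteq> {} \<longrightarrow> symdiff_sum S f \<noteq> {})"

definition ultrafilter_on_nat :: "nat set set \<Rightarrow> bool" where
  "ultrafilter_on_nat p \<longleftrightarrow>
     {} \<notin> p \<and> UNIV \<in> p \<and>
     (\<forall>A B. A \<in> p \<and> A \<subseteq> B \<longrightarrow> B \<in> p) \<and>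
     (\<forall>A B. A \<in> p \<and> B \<in> p \<longrightarrow> A \<inter> B \<in> p) \<and>
     (\<forall>A. A \<in> p \<or> - A \<in> p)"

definition free_ultrafilter_on_nat :: "nat set set \<Rightarrow> bool" where
  "free_ultrafilter_on_nat p \<longleftrightarrow> ultrafilter_on_nat p \<and> (\<forall>A. finite A \<longrightarrow> A \<notin> p)"

definition is_partition_nat :: "(nat \<Rightarrow> nat set) \<Rightarrow> bool" where
  "is_partition_nat A \<longleftrightarrow> (\<forall>n. A n \<noteq> {}) \<and> (\<forall>m n. m \<noteq> n \<longrightarrow> A m \<inter> A n = {})
     \<and> (\<Union>n. A n) = UNIV"

definition selective_ultrafilter :: "nat set set \<Rightarrow> bool" where
  "selective_ultrafilter p \<longleftrightarrow> free_ultrafilter_on_nat p \<and>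
     (\<forall>A. is_partition_nat A \<longrightarrow>
        (\<exists>n. A n \<in> p) \<or> (\<exists>B\<in>p. \<forall>n. \<exists>!x. x \<in> B \<inter> A n))"

definition rk_le :: "nat set set \<Rightarrow> nat set set \<Rightarrow> bool" where
  "rk_le p q \<longleftrightarrow> (\<exists>f :: nat \<Rightarrow> nat. p = {A. f -` A \<in> q})"

definition rk_incomparable :: "nat set set \<Rightarrow> nat set set \<Rightarrow> bool" where
  "rk_incomparable p q \<longleftrightarrow> \<not> rk_le p q \<and> \<not> rk_le q p"

end

theory Submission
  imports Defs "HOL-Library.Disjoint_Sets"
begin

text \<open>Choose in each p \<xi> a set B \<xi> so that these sets are pairwise disjoint and sparse:
  H a < a' whenever a < a' are members of \<Union>\<xi>. B \<xi>, for a threshold function H fixed below.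
  Cut \<omega> into blocks growing so fast that H maps a block below the next-but-one block. A
  selective ultrafilter contains a set meeting every block at most once, in blocks of one
  parity; and if p \<xi> and p \<eta> are RK-incomparable, p \<xi> contains a set whose block
  neighbourhood is not in p \<eta>, since otherwise both project to the same ultrafilter on blocks
  up to a shift, which would make them RK-comparable. Using that p \<xi> is a P-point and
  removing the neighbourhoods of the sets chosen for earlier indices, the members of all the
  B \<xi> end up two blocks apart. Enumerating \<Union>\<xi>. B \<xi> increasingly gives b, and r m is the
  \<xi> with b m \<in> B \<xi>.

  The sets E m are finite stages closed under the required operations and under even initial
  segments of y. Independence of the whole family g \<xi> gives, for finite S, only finitely
  many n for which some nontrivial combination of the g \<xi> n j is a subset of S; H is chosen
  beyond all of them, which yields independence modulo the singletons of E m.\<close>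

section \<open>Sums over the field 2\<close>

lemma symdiff_sum_Un_disjoint:
  assumes "finite A" "finite B" "A \<inter> B = {}"
  shows "x \<in> symdiff_sum (A \<union> B) f \<longleftrightarrow> (x \<in> symdiff_sum A f) \<noteq> (x \<in> symdiff_sum B f)"
proof -
  have "{j \<in> A \<union> B. x \<in> f j} = {j \<in> A. x \<in> f j} \<union> {j \<in> B. x \<in> f j}" by auto
  moreover have "card ({j \<in> A. x \<in> f j} \<union> {j \<in> B. x \<in> f j}) = card {j \<in> A. x \<in> f j} + card {j \<in> B. x \<in> f j}"
    using assms by (intro card_Un_disjoint) auto
  ultimately show ?thesis by (simp add: symdiff_sum_def)
qed

lemma symdiff_sum_image:
  assumes "inj_on h A"
  shows "symdiff_sum (h ` A) f = symdiff_sum A (f \<circ> h)"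
proof -
  have "{t \<in> h ` A. x \<in> f t} = h ` {j \<in> A. x \<in> f (h j)}" for x by auto
  moreover have "card (h ` {j \<in> A. x \<in> f (h j)}) = card {j \<in> A. x \<in> f (h j)}" for x
    using assms by (intro card_image) (auto intro: inj_on_subset)
  ultimately show ?thesis by (simp add: symdiff_sum_def)
qed

lemma symdiff_sum_singleton [simp]: "symdiff_sum {j} f = f j"
proof -
  have "{i \<in> {j}. x \<in> f i} = (if x \<in> f j then {j} else {})" for x by auto
  then show ?thesis by (auto simp: symdiff_sum_def)
qed

lemma symdiff_sum_empty [simp]: "symdiff_sum {} f = {}"
  by (simp add: symdiff_sum_def)

lemma symdiff_sum_singletons: "finite M \<Longrightarrow> symdiff_sum M (\<lambda>\<mu>. {\<mu>}) = M"
proof -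
  have "{j \<in> M. x \<in> {j}} = (if x \<in> M then {x} else {})" for x by auto
  then show ?thesis by (auto simp: symdiff_sum_def)
qed

lemma symdiff_sum_Un_eq_empty_iff:
  assumes "finite A" "finite B" "A \<inter> B = {}"
  shows "symdiff_sum (A \<union> B) f = {} \<longleftrightarrow> symdiff_sum A f = symdiff_sum B f"
  using symdiff_sum_Un_disjoint[OF assms, of _ f] by blast

text \<open>Independence of v 0, \<dots>, v (K - 1) modulo the span of the singletons of S, which
  consists of the finite subsets of S.\<close>
definition indep_modulo :: "nat \<Rightarrow> (nat \<Rightarrow> 'a set) \<Rightarrow> 'a set \<Rightarrow> bool" where
  "indep_modulo K v S \<longleftrightarrow> (\<forall>J. J \<subseteq> {..<K} \<and> J \<noteq> {} \<longrightarrow> \<not> symdiff_sum J v \<subseteq> S)"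

lemma indep_modulo_antimono: "S \<subseteq> S' \<Longrightarrow> indep_modulo K v S' \<Longrightarrow> indep_modulo K v S"
  unfolding indep_modulo_def by blast

text \<open>Pigeonhole: two n with the same nontrivial combination inside S give a vanishing
  combination of the independent family.\<close>
lemma finite_not_indep_modulo:
  assumes S: "finite S" and indep: "lin_indep {(j, n). j < K} (\<lambda>(j, n). v n j)"
  shows "finite {n. \<not> indep_modulo K (v n) S}"
proof (rule ccontr)
  let ?Bad = "{n. \<not> indep_modulo K (v n) S}"
  assume "infinite ?Bad"
  have "\<forall>n\<in>?Bad. \<exists>J. J \<subseteq> {..<K} \<and> J \<noteq> {} \<and> symdiff_sum J (v n) \<subseteq> S"
    by (auto simp: indep_modulo_def)
  then obtain J where J: "\<And>n. n \<in> ?Bad \<Longrightarrow> J n \<subseteq> {..<K} \<and> J n \<noteq> {} \<and> symdiff_sum (J n) (v n) \<subseteq> S"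
    by metis
  define sum_at where "sum_at n = symdiff_sum (J n) (v n)" for n
  have "sum_at ` ?Bad \<subseteq> Pow S" using J by (auto simp: sum_at_def)
  then have "finite (sum_at ` ?Bad)" using S by (meson finite_Pow_iff finite_subset)
  then have "\<not> inj_on sum_at ?Bad" using \<open>infinite ?Bad\<close> finite_imageD by blast
  then obtain n n' where nn: "n \<in> ?Bad" "n' \<in> ?Bad" "n \<noteq> n'" "sum_at n = sum_at n'"
    unfolding inj_on_def by blast
  let ?f = "\<lambda>(j, n). v n j"
  define T where "T n = (\<lambda>j. (j, n)) ` J n" for n
  have "finite (J n)" "finite (J n')" using J nn by (meson finite_lessThan finite_subset)+
  then have fin: "finite (T n)" "finite (T n')" by (simp_all add: T_def)
  have sums: "symdiff_sum (T i) ?f = sum_at i" for i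
    unfolding T_def sum_at_def by (subst symdiff_sum_image) (auto simp: inj_on_def comp_def)
  have "T n \<inter> T n' = {}" using nn(3) by (auto simp: T_def)
  then have "symdiff_sum (T n \<union> T n') ?f = {}"
    using symdiff_sum_Un_eq_empty_iff[OF fin] sums nn(4) by metis
  moreover have "T n \<union> T n' \<subseteq> {(j, m). j < K}" "T n \<union> T n' \<noteq> {}"
    using J nn(1,2) by (auto simp: T_def)
  ultimately show False using indep fin unfolding lin_indep_def by blast
qed

lemma Inl_Inr_vimage_split: "T = Inl ` (Inl -` T) \<union> Inr ` (Inr -` T)"
proof (rule set_eqI)
  fix x show "x \<in> T \<longleftrightarrow> x \<in> Inl ` (Inl -` T) \<union> Inr ` (Inr -` T)" by (cases x) auto
qed

lemma indep_modulo_imp_lin_indep: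
  assumes S: "finite S" and indep: "indep_modulo K v S"
  shows "lin_indep (Inl ` {..<K} \<union> Inr ` S) (\<lambda>x. case x of Inl j \<Rightarrow> v j | Inr \<mu> \<Rightarrow> {\<mu>})"
proof -
  let ?F = "\<lambda>x. case x of Inl j \<Rightarrow> v j | Inr \<mu> \<Rightarrow> {\<mu>}"
  let ?T = "Inl ` {..<K} \<union> Inr ` S"
  have nonzero: "symdiff_sum T ?F \<noteq> {}" if T: "T \<subseteq> ?T" "finite T" "T \<noteq> {}" for T
  proof
    assume zero: "symdiff_sum T ?F = {}"
    define J M where "J = Inl -` T" and "M = Inr -` T"
    have JM: "J \<subseteq> {..<K}" "M \<subseteq> S" "finite J" "finite M"
      using T S by (auto simp: J_def M_def intro: finite_subset finite_vimageI)
    have "symdiff_sum (Inl ` J) ?F = symdiff_sum J v" "symdiff_sum (Inr ` M) ?F = M"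
      using JM by (auto simp: symdiff_sum_image comp_def symdiff_sum_singletons)
    moreover have "symdiff_sum (Inl ` J \<union> Inr ` M) ?F = {}"
      using zero Inl_Inr_vimage_split[of T] by (simp add: J_def M_def)
    ultimately have "symdiff_sum J v = M"
      using symdiff_sum_Un_eq_empty_iff[of "Inl ` J" "Inr ` M" ?F] JM by auto
    then have "J = {}" "M = {}" using indep JM unfolding indep_modulo_def by auto
    then show False using T(3) Inl_Inr_vimage_split[of T] by (simp add: J_def M_def)
  qed
  have "inj_on ?F ?T"
  proof (rule inj_onI, rule ccontr)
    fix x x' assume "x \<in> ?T" "x' \<in> ?T" "?F x = ?F x'" "x \<noteq> x'"
    then show False
      using nonzero[of "{x, x'}"] symdiff_sum_Un_eq_empty_iff[of "{x}" "{x'}" ?F] by (simp add: insert_commute)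
  qed
  with nonzero show ?thesis unfolding lin_indep_def by blast
qed

section \<open>Ultrafilters on \<omega>\<close>

lemma ultrafilter_mono: "ultrafilter_on_nat p \<Longrightarrow> A \<in> p \<Longrightarrow> A \<subseteq> B \<Longrightarrow> B \<in> p"
  unfolding ultrafilter_on_nat_def by blast

lemma ultrafilter_Int: "ultrafilter_on_nat p \<Longrightarrow> A \<in> p \<Longrightarrow> B \<in> p \<Longrightarrow> A \<inter> B \<in> p"
  unfolding ultrafilter_on_nat_def by blast

lemma ultrafilter_empty: "ultrafilter_on_nat p \<Longrightarrow> {} \<notin> p"
  unfolding ultrafilter_on_nat_def by blast

lemma ultrafilter_UNIV: "ultrafilter_on_nat p \<Longrightarrow> UNIV \<in> p"
  unfolding ultrafilter_on_nat_def by blast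

lemma ultrafilter_Compl_iff: "ultrafilter_on_nat p \<Longrightarrow> - A \<in> p \<longleftrightarrow> A \<notin> p"
  unfolding ultrafilter_on_nat_def by (metis Compl_disjoint)

lemma ultrafilter_Un: "ultrafilter_on_nat p \<Longrightarrow> A \<union> B \<in> p \<Longrightarrow> A \<in> p \<or> B \<in> p"
  by (metis Compl_Un ultrafilter_Compl_iff ultrafilter_Int)

lemma ultrafilter_finite_Union:
  assumes p: "ultrafilter_on_nat p" and "finite X" "\<forall>A\<in>X. A \<notin> p"
  shows "\<Union>X \<notin> p"
  using assms(2,3)
proof (induction X rule: finite_induct)
  case empty then show ?case using ultrafilter_empty[OF p] by simp
next
  case (insert A X) then show ?case using ultrafilter_Un[OF p, of A "\<Union>X"] by auto
qed

lemma ultrafilter_Diff_finite_Union: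
  assumes p: "ultrafilter_on_nat p" and "A \<in> p" "finite X" "\<forall>D\<in>X. D \<notin> p"
  shows "A - \<Union>X \<in> p"
proof -
  have "\<Union>X \<notin> p" using ultrafilter_finite_Union[OF p assms(3,4)] .
  then have "- \<Union>X \<in> p" using ultrafilter_Compl_iff[OF p] by simp
  then show ?thesis using ultrafilter_Int[OF p \<open>A \<in> p\<close>] by (simp add: Diff_eq)
qed

lemma ultrafilter_cong:
  "ultrafilter_on_nat p \<Longrightarrow> S \<in> p \<Longrightarrow> A \<inter> S = B \<inter> S \<Longrightarrow> A \<in> p \<longleftrightarrow> B \<in> p"
  by (metis inf_le1 ultrafilter_Int ultrafilter_mono)

lemma ultrafilter_neq_witness:
  assumes "ultrafilter_on_nat p" "ultrafilter_on_nat q" "p \<noteq> q"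
  obtains D where "D \<in> p" "D \<notin> q"
  using assms ultrafilter_Compl_iff by blast

lemma ultrafilter_parity_class:
  assumes p: "ultrafilter_on_nat p"
  shows "\<exists>Q\<in>p. \<forall>a\<in>Q. \<forall>a'\<in>Q. even (f a) = even (f a')"
proof (cases "f -` {n. even n} \<in> p")
  case False
  moreover have "f -` {n. odd n} = - (f -` {n. even n})" by auto
  ultimately have "f -` {n. odd n} \<in> p" using ultrafilter_Compl_iff[OF p] by simp
  then show ?thesis by (intro bexI[of _ "f -` {n. odd n}"]) auto
qed (intro bexI[of _ "f -` {n. even n}"], auto)

lemma free_ultrafilter_finite: "free_ultrafilter_on_nat p \<Longrightarrow> finite A \<Longrightarrow> A \<notin> p"
  unfolding free_ultrafilter_on_nat_def by blast

lemma selective_imp_free: "selective_ultrafilter p \<Longrightarrow> free_ultrafilter_on_nat p"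
  unfolding selective_ultrafilter_def by blast

lemma selective_imp_ultrafilter: "selective_ultrafilter p \<Longrightarrow> ultrafilter_on_nat p"
  using selective_imp_free unfolding free_ultrafilter_on_nat_def by blast

lemma selective_infinite: "selective_ultrafilter p \<Longrightarrow> A \<in> p \<Longrightarrow> infinite A"
  using free_ultrafilter_finite selective_imp_free by blast

lemma selective_greaterThan: "selective_ultrafilter p \<Longrightarrow> {c<..} \<in> p"
  by (metis Compl_greaterThan finite_atMost selective_infinite selective_imp_ultrafilter
      ultrafilter_Compl_iff)

lemma ultrafilter_finite_range:
  assumes p: "ultrafilter_on_nat p" and "finite (range \<phi>)"
  shows "\<exists>v. \<phi> -` {v} \<in> p"
proof -
  have "\<Union>((\<lambda>v. \<phi> -` {v}) ` range \<phi>) = UNIV" by auto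
  then have "\<Union>((\<lambda>v. \<phi> -` {v}) ` range \<phi>) \<in> p" using ultrafilter_UNIV[OF p] by simp
  moreover have "finite ((\<lambda>v. \<phi> -` {v}) ` range \<phi>)" using assms(2) by simp
  ultimately show ?thesis using ultrafilter_finite_Union[OF p] by blast
qed

lemma selective_constant_or_inj_on:
  fixes \<phi> :: "nat \<Rightarrow> nat"
  assumes sel: "selective_ultrafilter p"
  shows "(\<exists>v. \<phi> -` {v} \<in> p) \<or> (\<exists>B\<in>p. inj_on \<phi> B)"
proof (cases "finite (range \<phi>)")
  case True
  then show ?thesis using ultrafilter_finite_range sel selective_imp_ultrafilter by blast
next
  case False
  define en where "en = enumerate (range \<phi>)"
  define A where "A n = \<phi> -` {en n}" for n
  have en: "bij_betw en UNIV (range \<phi>)" unfolding en_def using False by (rule bij_enumerate)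
  have en_surj: "\<exists>n. \<phi> x = en n" for x
    using bij_betw_imp_surj_on[OF en] by (metis rangeE rangeI)
  have en_inj: "inj en" using bij_betw_imp_inj_on[OF en] .
  have "is_partition_nat A"
    unfolding is_partition_nat_def
  proof (intro conjI allI impI)
    show "A n \<noteq> {}" for n
    proof -
      obtain x where "\<phi> x = en n" using bij_betw_apply[OF en UNIV_I, of n] by (metis rangeE)
      then show ?thesis by (auto simp: A_def)
    qed
    show "A m \<inter> A n = {}" if "m \<noteq> n" for m n
      using that injD[OF en_inj, of m n] by (auto simp: A_def)
    show "(\<Union>n. A n) = UNIV" using en_surj by (auto simp: A_def)
  qed
  with sel have "(\<exists>n. A n \<in> p) \<or> (\<exists>B\<in>p. \<forall>n. \<exists>!x. x \<in> B \<inter> A n)"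
    unfolding selective_ultrafilter_def by blast
  then show ?thesis
  proof
    assume "\<exists>n. A n \<in> p"
    then show ?thesis unfolding A_def by blast
  next
    assume "\<exists>B\<in>p. \<forall>n. \<exists>!x. x \<in> B \<inter> A n"
    then obtain B where "B \<in> p" and B: "\<forall>n. \<exists>!x. x \<in> B \<inter> A n" by blast
    have "inj_on \<phi> B"
    proof (rule inj_onI)
      fix x x' assume "x \<in> B" "x' \<in> B" "\<phi> x = \<phi> x'"
      moreover obtain n where "\<phi> x = en n" using en_surj by blast
      ultimately have "x \<in> B \<inter> A n" "x' \<in> B \<inter> A n" by (auto simp: A_def)
      then show "x = x'" using B by blast
    qed
    with \<open>B \<in> p\<close> show ?thesis by blast
  qed
qed

lemma ultrafilter_INT_atMost:
  fixes A :: "nat \<Rightarrow> nat set"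
  assumes p: "ultrafilter_on_nat p" and A: "\<And>n. A n \<in> p"
  shows "(\<Inter>l\<le>n. A l) \<in> p"
proof (induction n)
  case (Suc n)
  have "(\<Inter>l\<le>Suc n. A l) = (\<Inter>l\<le>n. A l) \<inter> A (Suc n)" by (auto simp: le_Suc_eq)
  then show ?case using Suc ultrafilter_Int[OF p] A by simp
qed (simp add: A)

lemma finite_inj_on_le: "inj_on \<phi> B \<Longrightarrow> finite {x \<in> B. \<phi> x \<le> (n :: nat)}"
  by (rule finite_imageD[OF finite_subset[of _ "{..n}"]]) (auto intro: inj_on_subset)

lemma selective_pseudo_intersection:
  fixes A :: "nat \<Rightarrow> nat set"
  assumes sel: "selective_ultrafilter p" and A: "\<And>n. A n \<in> p"
  shows "\<exists>C\<in>p. \<forall>n. finite (C - A n)"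
proof -
  have p: "ultrafilter_on_nat p" using sel selective_imp_ultrafilter by blast
  define A' where "A' n = (\<Inter>l\<le>n. A l)" for n
  have A'p: "A' n \<in> p" for n unfolding A'_def using p A by (rule ultrafilter_INT_atMost)
  show ?thesis
  proof (cases "(\<Inter>n. A' n) \<in> p")
    case True
    moreover have "(\<Inter>n. A' n) - A n = {}" for n by (auto simp: A'_def)
    ultimately show ?thesis by (metis finite.emptyI)
  next
    case False
    define Z where "Z = - (\<Inter>n. A' n)"
    have Zp: "Z \<in> p" using False ultrafilter_Compl_iff[OF p] Z_def by blast
    define \<phi> where "\<phi> x = (LEAST n. x \<notin> A' n)" for x
    have \<phi>_out: "x \<in> Z \<Longrightarrow> x \<notin> A' (\<phi> x)" for x
      unfolding \<phi>_def Z_def by (rule LeastI_ex) auto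
    have \<phi>_le: "x \<notin> A' n \<Longrightarrow> \<phi> x \<le> n" for x n
      unfolding \<phi>_def by (rule Least_le)
    have "\<phi> -` {v} \<notin> p" for v
    proof
      assume "\<phi> -` {v} \<in> p"
      then have "\<phi> -` {v} \<inter> Z \<inter> A' v \<in> p" using Zp A'p ultrafilter_Int[OF p] by blast
      moreover have "\<phi> -` {v} \<inter> Z \<inter> A' v = {}" using \<phi>_out by auto
      ultimately show False using ultrafilter_empty[OF p] by simp
    qed
    then obtain B where B: "B \<in> p" "inj_on \<phi> B" using selective_constant_or_inj_on[OF sel] by blast
    have "finite (B \<inter> Z - A n)" for n
    proof -
      have "B \<inter> Z - A n \<subseteq> {x \<in> B. \<phi> x \<le> n}" using \<phi>_le by (auto simp: A'_def)
      moreover have "finite {x \<in> B. \<phi> x \<le> n}" using B(2) by (rule finite_inj_on_le)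
      ultimately show ?thesis using finite_subset by blast
    qed
    moreover have "B \<inter> Z \<in> p" using B Zp ultrafilter_Int[OF p] by blast
    ultimately show ?thesis by blast
  qed
qed

definition pushforward :: "(nat \<Rightarrow> nat) \<Rightarrow> nat set set \<Rightarrow> nat set set" where
  "pushforward f p = {A. f -` A \<in> p}"

lemma rk_le_iff_pushforward: "rk_le p q \<longleftrightarrow> (\<exists>f. p = pushforward f q)"
  unfolding rk_le_def pushforward_def by simp

lemma pushforward_comp: "pushforward f (pushforward h p) = pushforward (f \<circ> h) p"
  unfolding pushforward_def by (simp add: vimage_comp)

lemma pushforward_id [simp]: "pushforward id p = p"
  unfolding pushforward_def by simp

lemma ultrafilter_pushforward:
  assumes p: "ultrafilter_on_nat p"
  shows "ultrafilter_on_nat (pushforward f p)"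
  unfolding ultrafilter_on_nat_def pushforward_def mem_Collect_eq
proof (intro conjI allI impI)
  show "f -` {} \<notin> p" "f -` UNIV \<in> p" using ultrafilter_empty[OF p] ultrafilter_UNIV[OF p] by simp_all
  show "f -` B \<in> p" if "f -` A \<in> p \<and> A \<subseteq> B" for A B
    using that ultrafilter_mono[OF p, of "f -` A" "f -` B"] by auto
  show "f -` (A \<inter> B) \<in> p" if "f -` A \<in> p \<and> f -` B \<in> p" for A B
    using that ultrafilter_Int[OF p, of "f -` A" "f -` B"] by (simp add: vimage_Int)
  show "f -` A \<in> p \<or> f -` (- A) \<in> p" for A
    using ultrafilter_Compl_iff[OF p, of "f -` A"] by (auto simp: vimage_Compl)
qed

lemma pushforward_inv_into:
  assumes p: "ultrafilter_on_nat p" and S: "S \<in> p" "inj_on \<pi> S"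
  shows "pushforward (inv_into S \<pi>) (pushforward \<pi> p) = p"
proof -
  have "(inv_into S \<pi> \<circ> \<pi>) -` A \<inter> S = A \<inter> S" for A using S(2) by auto
  then have "(inv_into S \<pi> \<circ> \<pi>) -` A \<in> p \<longleftrightarrow> A \<in> p" for A
    by (rule ultrafilter_cong[OF p S(1)])
  then show ?thesis unfolding pushforward_comp by (simp add: pushforward_def)
qed

section \<open>Fast-growing blocks\<close>

text \<open>Consecutive blocks [block_start H n, block_start H (n+1)) grow so fast that H maps
  each block below the start of the next-but-one block.\<close>
fun block_start :: "(nat \<Rightarrow> nat) \<Rightarrow> nat \<Rightarrow> nat" where
  "block_start H 0 = 0"
| "block_start H (Suc n) = Max (H ` {..block_start H n}) + block_start H n + 1"

definition block_of :: "(nat \<Rightarrow> nat) \<Rightarrow> nat \<Rightarrow> nat" where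
  "block_of H x = (LEAST n. x < block_start H (Suc n))"

lemma strict_mono_block_start: "strict_mono (block_start H)"
  by (rule strict_mono_Suc_iff[THEN iffD2]) simp

lemma block_start_ge: "n \<le> block_start H n"
  by (induction n) auto

lemma less_block_start_Suc_block_of: "x < block_start H (Suc (block_of H x))"
proof -
  have "x < block_start H (Suc x)" using block_start_ge[of "Suc x" H] by simp
  then show ?thesis unfolding block_of_def by (rule LeastI)
qed

lemma block_of_le: "x < block_start H (Suc n) \<Longrightarrow> block_of H x \<le> n"
  unfolding block_of_def by (rule Least_le)

lemma block_start_block_of_le: "block_start H (block_of H x) \<le> x"
proof (cases "block_of H x")
  case (Suc m)
  then have "\<not> x < block_start H (Suc m)" unfolding block_of_def by (metis lessI not_less_Least)
  then show ?thesis using Suc by simp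
qed simp

lemma mono_block_of: "mono (block_of H)"
proof
  fix x x' :: nat assume "x \<le> x'"
  then show "block_of H x \<le> block_of H x'"
    using less_block_start_Suc_block_of[of x' H] by (intro block_of_le) simp_all
qed

lemma finite_vimage_block_of: "finite D \<Longrightarrow> finite (block_of H -` D)"
proof -
  assume "finite D"
  then obtain M where M: "D \<subseteq> {..M}" using finite_nat_iff_bounded_le by auto
  have "block_of H -` D \<subseteq> {..<block_start H (Suc M)}"
  proof
    fix x assume "x \<in> block_of H -` D"
    then have "block_of H x \<le> M" using M by auto
    then have "block_start H (Suc (block_of H x)) \<le> block_start H (Suc M)"
      by (metis Suc_le_mono strict_mono_block_start strict_mono_less_eq)
    then show "x \<in> {..<block_start H (Suc M)}" using less_block_start_Suc_block_of[of x H] by simp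
  qed
  then show ?thesis using finite_subset by blast
qed

lemma block_of_sparse:
  assumes "block_of H a + 2 \<le> block_of H a'"
  shows "H a < a'"
proof -
  let ?n = "block_of H a"
  have "block_start H (Suc (Suc ?n)) \<le> block_start H (block_of H a')"
    using assms by (simp del: block_start.simps add: strict_mono_less_eq[OF strict_mono_block_start])
  then have "block_start H (Suc (Suc ?n)) \<le> a'"
    using block_start_block_of_le[of H a'] by linarith
  moreover have "H a \<le> Max (H ` {..block_start H (Suc ?n)})"
    using less_block_start_Suc_block_of[of a H] by (intro Max_ge) auto
  ultimately show ?thesis by (simp only: block_start.simps)
qed

definition block_nbhd :: "(nat \<Rightarrow> nat) \<Rightarrow> nat set \<Rightarrow> nat set" where
  "block_nbhd H C =
     {x. \<exists>a\<in>C. block_of H x \<le> Suc (block_of H a) \<and> block_of H a \<le> Suc (block_of H x)}"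

lemma block_nbhd_mono: "C \<subseteq> C' \<Longrightarrow> block_nbhd H C \<subseteq> block_nbhd H C'"
  unfolding block_nbhd_def by blast

lemma block_nbhd_Un: "block_nbhd H (C \<union> C') = block_nbhd H C \<union> block_nbhd H C'"
  unfolding block_nbhd_def by blast

lemma finite_block_nbhd:
  assumes "finite C"
  shows "finite (block_nbhd H C)"
proof -
  let ?M = "Max (insert 0 (block_of H ` C))"
  have "block_of H a \<le> ?M" if "a \<in> C" for a using assms that by simp
  then have "block_nbhd H C \<subseteq> block_of H -` {..Suc ?M}"
    unfolding block_nbhd_def by (auto intro: le_trans)
  then show ?thesis by (meson finite_subset finite_vimage_block_of finite_atMost)
qed

definition block_separated :: "(nat \<Rightarrow> nat) \<Rightarrow> nat \<Rightarrow> nat \<Rightarrow> bool" where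
  "block_separated H a a' \<longleftrightarrow> block_of H a + 2 \<le> block_of H a' \<or> block_of H a' + 2 \<le> block_of H a"

lemma block_separated_commute: "block_separated H a a' \<longleftrightarrow> block_separated H a' a"
  unfolding block_separated_def by auto

lemma not_block_separated_self: "\<not> block_separated H a a"
  unfolding block_separated_def by simp

lemma block_separated_sparse:
  assumes "block_separated H a a'" "a < a'"
  shows "H a < a'"
proof -
  have "block_of H a \<le> block_of H a'" using mono_block_of assms(2) by (simp add: monoD)
  with assms(1) have "block_of H a + 2 \<le> block_of H a'" unfolding block_separated_def by linarith
  then show ?thesis by (rule block_of_sparse)
qed

lemma not_in_block_nbhd_separated:
  assumes "a' \<in> C" "a \<notin> block_nbhd H C"
  shows "block_separated H a a'"
proof -
  have "\<not> (block_of H a \<le> Suc (block_of H a') \<and> block_of H a' \<le> Suc (block_of H a))"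
    using assms unfolding block_nbhd_def by blast
  then show ?thesis unfolding block_separated_def by linarith
qed

lemma block_separated_of_parity:
  "block_of H a \<noteq> block_of H a' \<Longrightarrow> even (block_of H a) = even (block_of H a') \<Longrightarrow> block_separated H a a'"
proof -
  assume "block_of H a \<noteq> block_of H a'" "even (block_of H a) = even (block_of H a')"
  then have "block_of H a' \<noteq> Suc (block_of H a)" "block_of H a \<noteq> Suc (block_of H a')" by auto
  with \<open>block_of H a \<noteq> block_of H a'\<close> show ?thesis unfolding block_separated_def by linarith
qed

section \<open>Separating RK-incomparable selective ultrafilters\<close>

lemma selective_inj_on_block_of:
  assumes sel: "selective_ultrafilter u"
  shows "\<exists>S\<in>u. inj_on (block_of H) S"
proof -
  have "block_of H -` {v} \<notin> u" for v
    using selective_infinite[OF sel] finite_vimage_block_of[of "{v}" H] by blast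
  then show ?thesis using selective_constant_or_inj_on[OF sel] by blast
qed

lemma pushforward_block_of_adjacent:
  assumes u: "ultrafilter_on_nat u" and v: "ultrafilter_on_nat v"
    and nbhd: "\<And>A. A \<in> u \<Longrightarrow> block_nbhd H A \<in> v"
  defines "q \<equiv> pushforward (block_of H) u" and "q' \<equiv> pushforward (block_of H) v"
  shows "q = q' \<or> pushforward Suc q = q' \<or> q = pushforward Suc q'"
proof (rule ccontr)
  let ?\<pi> = "block_of H"
  have q: "ultrafilter_on_nat q" "ultrafilter_on_nat (pushforward Suc q)"
    and q': "ultrafilter_on_nat q'" "ultrafilter_on_nat (pushforward Suc q')"
    unfolding q_def q'_def using u v by (simp_all add: ultrafilter_pushforward)
  assume "\<not> ?thesis"
  then obtain D0 D1 D2 where D: "D0 \<in> q" "D0 \<notin> q'" "D1 \<in> pushforward Suc q" "D1 \<notin> q'"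
    "D2 \<in> q" "D2 \<notin> pushforward Suc q'"
    using ultrafilter_neq_witness q q' by metis
  define D where "D = D0 \<inter> Suc -` D1 \<inter> D2"
  have "D \<in> q" using D ultrafilter_Int[OF q(1)] unfolding D_def pushforward_def by simp
  then have "block_nbhd H (?\<pi> -` D) \<in> v" using nbhd unfolding q_def pushforward_def by simp
  moreover have "block_nbhd H (?\<pi> -` D) \<subseteq> ?\<pi> -` D0 \<union> ?\<pi> -` D1 \<union> ?\<pi> -` (Suc -` D2)"
  proof
    fix x assume "x \<in> block_nbhd H (?\<pi> -` D)"
    then obtain a where "?\<pi> a \<in> D" "?\<pi> x \<le> Suc (?\<pi> a)" "?\<pi> a \<le> Suc (?\<pi> x)"
      unfolding block_nbhd_def by blast
    then consider "?\<pi> x = ?\<pi> a" | "?\<pi> x = Suc (?\<pi> a)" | "?\<pi> a = Suc (?\<pi> x)" by linarith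
    then show "x \<in> ?\<pi> -` D0 \<union> ?\<pi> -` D1 \<union> ?\<pi> -` (Suc -` D2)"
      using \<open>?\<pi> a \<in> D\<close> unfolding D_def by cases auto
  qed
  ultimately have "?\<pi> -` D0 \<union> ?\<pi> -` D1 \<union> ?\<pi> -` (Suc -` D2) \<in> v" by (rule ultrafilter_mono[OF v])
  then show False
    using D ultrafilter_Un[OF v] unfolding q'_def pushforward_def by (auto simp: vimage_comp)
qed

lemma rk_incomparable_block_nbhd:
  assumes u: "selective_ultrafilter u" and v: "selective_ultrafilter v"
    and "rk_incomparable u v"
  shows "\<exists>A\<in>u. block_nbhd H A \<notin> v"
proof (rule ccontr)
  let ?\<pi> = "block_of H"
  let ?q = "pushforward ?\<pi> u" and ?q' = "pushforward ?\<pi> v"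
  assume "\<not> ?thesis"
  then have "?q = ?q' \<or> pushforward Suc ?q = ?q' \<or> ?q = pushforward Suc ?q'"
    using u v selective_imp_ultrafilter by (intro pushforward_block_of_adjacent) blast+
  moreover have "pushforward (\<lambda>n. n - 1) (pushforward Suc ?q) = ?q"
    by (simp add: pushforward_comp comp_def flip: id_def)
  ultimately obtain h where h: "?q = pushforward h ?q'"
    by (metis pushforward_id)
  obtain S where "S \<in> u" "inj_on ?\<pi> S" using selective_inj_on_block_of[OF u] by blast
  then have "u = pushforward (inv_into S ?\<pi>) (pushforward ?\<pi> u)"
    using pushforward_inv_into u selective_imp_ultrafilter by metis
  then have "u = pushforward (inv_into S ?\<pi> \<circ> h \<circ> ?\<pi>) v"
    by (simp add: h pushforward_comp comp_assoc)
  then have "rk_le u v" unfolding rk_le_iff_pushforward by blast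
  with \<open>rk_incomparable u v\<close> show False unfolding rk_incomparable_def by blast
qed

text \<open>C is taken almost inside the separating sets for all \<eta> \<noteq> \<xi> at once, using that
  p \<xi> is a P-point; finite errors do not matter because block neighbourhoods of finite sets
  are finite.\<close>
lemma block_nbhd_avoiding_others:
  fixes I :: "'a set" and p :: "'a \<Rightarrow> nat set set"
  assumes "countable I" and sel: "\<forall>\<xi>\<in>I. selective_ultrafilter (p \<xi>)"
    and rk: "\<forall>\<xi>\<in>I. \<forall>\<eta>\<in>I. \<xi> \<noteq> \<eta> \<longrightarrow> rk_incomparable (p \<xi>) (p \<eta>)"
    and \<xi>: "\<xi> \<in> I"
  shows "\<exists>C\<in>p \<xi>. \<forall>\<eta>\<in>I. \<eta> \<noteq> \<xi> \<longrightarrow> block_nbhd H C \<notin> p \<eta>"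
proof -
  have "\<forall>\<eta>\<in>I - {\<xi>}. \<exists>A\<in>p \<xi>. block_nbhd H A \<notin> p \<eta>"
  proof
    fix \<eta> assume "\<eta> \<in> I - {\<xi>}"
    then have "rk_incomparable (p \<xi>) (p \<eta>)" "selective_ultrafilter (p \<eta>)" using rk sel \<xi> by auto
    then show "\<exists>A\<in>p \<xi>. block_nbhd H A \<notin> p \<eta>"
      using rk_incomparable_block_nbhd sel \<xi> by blast
  qed
  then obtain A where A: "\<And>\<eta>. \<eta> \<in> I - {\<xi>} \<Longrightarrow> A \<eta> \<in> p \<xi> \<and> block_nbhd H (A \<eta>) \<notin> p \<eta>"
    by metis
  define A' where "A' n = (if from_nat_into I n = \<xi> then UNIV else A (from_nat_into I n))" for n
  have "I \<noteq> {}" using \<xi> by blast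
  then have "from_nat_into I n \<in> I" for n by (rule from_nat_into)
  then have "A' n \<in> p \<xi>" for n
    using A ultrafilter_UNIV selective_imp_ultrafilter sel \<xi> unfolding A'_def by simp
  then obtain C where C: "C \<in> p \<xi>" "\<And>n. finite (C - A' n)"
    using selective_pseudo_intersection[of "p \<xi>" A'] sel \<xi> by blast
  have "block_nbhd H C \<notin> p \<eta>" if \<eta>: "\<eta> \<in> I" "\<eta> \<noteq> \<xi>" for \<eta>
  proof
    have u: "ultrafilter_on_nat (p \<eta>)" "free_ultrafilter_on_nat (p \<eta>)"
      using sel \<eta>(1) selective_imp_ultrafilter selective_imp_free by blast+
    obtain n where "from_nat_into I n = \<eta>" using from_nat_into_surj[OF \<open>countable I\<close> \<eta>(1)] by blast
    then have "finite (C - A \<eta>)" using C(2)[of n] \<eta>(2) by (simp add: A'_def)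
    assume "block_nbhd H C \<in> p \<eta>"
    moreover have "block_nbhd H C \<subseteq> block_nbhd H (A \<eta> \<union> (C - A \<eta>))"
      by (rule block_nbhd_mono) blast
    then have "block_nbhd H C \<subseteq> block_nbhd H (A \<eta>) \<union> block_nbhd H (C - A \<eta>)"
      by (simp only: block_nbhd_Un)
    ultimately have "block_nbhd H (A \<eta>) \<in> p \<eta> \<or> block_nbhd H (C - A \<eta>) \<in> p \<eta>"
      using ultrafilter_mono[OF u(1)] ultrafilter_Un[OF u(1)] by blast
    then show False
      using A[of \<eta>] \<eta> free_ultrafilter_finite[OF u(2) finite_block_nbhd[OF \<open>finite (C - A \<eta>)\<close>]]
      by blast
  qed
  with C(1) show ?thesis by blast
qed

lemma finite_to_nat_on_less:
  assumes "countable I"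
  shows "finite {\<eta> \<in> I. to_nat_on I \<eta> < n}"
proof -
  have "inj_on (to_nat_on I) {\<eta> \<in> I. to_nat_on I \<eta> < n}"
    using inj_on_to_nat_on[OF assms] by (rule inj_on_subset) blast
  moreover have "to_nat_on I ` {\<eta> \<in> I. to_nat_on I \<eta> < n} \<subseteq> {..<n}" by auto
  ultimately show ?thesis using finite_imageD finite_subset by blast
qed

lemma block_separated_across:
  fixes idx :: "'a \<Rightarrow> nat"
  assumes "inj_on idx I" "\<xi> \<in> I" "\<eta> \<in> I" "\<xi> \<noteq> \<eta>" "a \<in> B \<xi>" "a' \<in> B \<eta>"
    and avoid: "\<And>\<xi> \<eta>. \<xi> \<in> I \<Longrightarrow> \<eta> \<in> I \<Longrightarrow> idx \<eta> < idx \<xi> \<Longrightarrow> B \<xi> \<inter> block_nbhd H (C \<eta>) = {}"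
    and B_C: "\<And>\<xi>. B \<xi> \<subseteq> C \<xi>"
  shows "block_separated H a a'"
proof (cases "idx \<eta> < idx \<xi>")
  case True
  then have "a \<notin> block_nbhd H (C \<eta>)" using avoid assms(2,3,5) by blast
  then show ?thesis using B_C assms(6) by (blast intro: not_in_block_nbhd_separated)
next
  case False
  moreover have "idx \<xi> \<noteq> idx \<eta>" using assms(1-4) by (metis inj_on_eq_iff)
  ultimately have "idx \<xi> < idx \<eta>" by linarith
  then have "a' \<notin> block_nbhd H (C \<xi>)" using avoid assms(2,3,6) by blast
  then show ?thesis
    using B_C assms(5) not_in_block_nbhd_separated block_separated_commute by blast
qed

lemma block_separated_sets:
  fixes I :: "'a set" and p :: "'a \<Rightarrow> nat set set"
  assumes cI: "countable I" and sel: "\<forall>\<xi>\<in>I. selective_ultrafilter (p \<xi>)"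
    and rk: "\<forall>\<xi>\<in>I. \<forall>\<eta>\<in>I. \<xi> \<noteq> \<eta> \<longrightarrow> rk_incomparable (p \<xi>) (p \<eta>)"
  shows "\<exists>B. (\<forall>\<xi>\<in>I. B \<xi> \<in> p \<xi>) \<and>
    (\<forall>\<xi>\<in>I. \<forall>\<eta>\<in>I. \<forall>a\<in>B \<xi>. \<forall>a'\<in>B \<eta>. (\<xi> \<noteq> \<eta> \<or> a \<noteq> a') \<longrightarrow> block_separated H a a')"
proof -
  let ?\<pi> = "block_of H" and ?idx = "to_nat_on I"
  have uf: "ultrafilter_on_nat (p \<xi>)" if "\<xi> \<in> I" for \<xi>
    using sel that selective_imp_ultrafilter by blast
  have "\<forall>\<xi>\<in>I. \<exists>S\<in>p \<xi>. inj_on ?\<pi> S" using sel selective_inj_on_block_of by blast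
  then obtain S where S: "\<And>\<xi>. \<xi> \<in> I \<Longrightarrow> S \<xi> \<in> p \<xi> \<and> inj_on ?\<pi> (S \<xi>)" by metis
  have "\<forall>\<xi>\<in>I. \<exists>Q\<in>p \<xi>. \<forall>a\<in>Q. \<forall>a'\<in>Q. even (?\<pi> a) = even (?\<pi> a')"
    using ultrafilter_parity_class[OF uf] by blast
  then obtain Q where Q: "\<And>\<xi>. \<xi> \<in> I \<Longrightarrow> Q \<xi> \<in> p \<xi> \<and> (\<forall>a\<in>Q \<xi>. \<forall>a'\<in>Q \<xi>. even (?\<pi> a) = even (?\<pi> a'))"
    by metis
  have "\<forall>\<xi>\<in>I. \<exists>C\<in>p \<xi>. \<forall>\<eta>\<in>I. \<eta> \<noteq> \<xi> \<longrightarrow> block_nbhd H C \<notin> p \<eta>"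
    using block_nbhd_avoiding_others[OF cI sel rk] by blast
  then obtain C where C: "\<And>\<xi>. \<xi> \<in> I \<Longrightarrow> C \<xi> \<in> p \<xi> \<and> (\<forall>\<eta>\<in>I. \<eta> \<noteq> \<xi> \<longrightarrow> block_nbhd H (C \<xi>) \<notin> p \<eta>)"
    by metis
  define earlier where "earlier \<xi> = {\<eta> \<in> I. ?idx \<eta> < ?idx \<xi>}" for \<xi>
  \<comment> \<open>Two members of one B \<xi> lie in distinct blocks of equal parity; a member of a later
    B \<xi> avoids the block neighbourhood of the earlier C \<eta>.\<close>
  define B where "B \<xi> = C \<xi> \<inter> S \<xi> \<inter> Q \<xi> - \<Union> (block_nbhd H ` C ` earlier \<xi>)" for \<xi>
  have "B \<xi> \<in> p \<xi>" if \<xi>: "\<xi> \<in> I" for \<xi>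
    unfolding B_def
  proof (rule ultrafilter_Diff_finite_Union[OF uf[OF \<xi>]])
    show "C \<xi> \<inter> S \<xi> \<inter> Q \<xi> \<in> p \<xi>" using C S Q \<xi> ultrafilter_Int[OF uf[OF \<xi>]] by simp
    show "finite (block_nbhd H ` C ` earlier \<xi>)"
      using finite_to_nat_on_less[OF cI] by (simp add: earlier_def)
    show "\<forall>D\<in>block_nbhd H ` C ` earlier \<xi>. D \<notin> p \<xi>"
    proof
      fix D assume "D \<in> block_nbhd H ` C ` earlier \<xi>"
      then obtain \<eta> where "\<eta> \<in> I" "\<eta> \<noteq> \<xi>" "D = block_nbhd H (C \<eta>)"
        unfolding earlier_def by blast
      then show "D \<notin> p \<xi>" using C[of \<eta>] \<xi> by auto
    qed
  qed
  moreover have "block_separated H a a'"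
    if "\<xi> \<in> I" "\<eta> \<in> I" "a \<in> B \<xi>" "a' \<in> B \<eta>" "\<xi> \<noteq> \<eta> \<or> a \<noteq> a'" for \<xi> \<eta> a a'
  proof (cases "\<xi> = \<eta>")
    case True
    with that have "a \<noteq> a'" "a \<in> S \<xi>" "a' \<in> S \<xi>" "a \<in> Q \<xi>" "a' \<in> Q \<xi>"
      by (auto simp: B_def)
    then have "?\<pi> a \<noteq> ?\<pi> a'" "even (?\<pi> a) = even (?\<pi> a')"
      using S[OF that(1)] Q[OF that(1)] inj_on_eq_iff by metis+
    then show ?thesis by (rule block_separated_of_parity)
  next
    case False
    have "B \<xi> \<inter> block_nbhd H (C \<eta>) = {}" if "\<xi> \<in> I" "\<eta> \<in> I" "?idx \<eta> < ?idx \<xi>" for \<xi> \<eta>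
      using that by (auto simp: B_def earlier_def)
    moreover have "B \<xi> \<subseteq> C \<xi>" for \<xi> by (auto simp: B_def)
    ultimately show ?thesis
      using block_separated_across[OF inj_on_to_nat_on[OF cI]] that False by blast
  qed
  ultimately show ?thesis by blast
qed

lemma sparse_disjoint_sets:
  fixes I :: "'a set" and p :: "'a \<Rightarrow> nat set set" and c :: "'a \<Rightarrow> nat" and H :: "nat \<Rightarrow> nat"
  assumes cI: "countable I" and sel: "\<forall>\<xi>\<in>I. selective_ultrafilter (p \<xi>)"
    and rk: "\<forall>\<xi>\<in>I. \<forall>\<eta>\<in>I. \<xi> \<noteq> \<eta> \<longrightarrow> rk_incomparable (p \<xi>) (p \<eta>)"
  obtains B where "\<And>\<xi>. \<xi> \<in> I \<Longrightarrow> B \<xi> \<in> p \<xi>" "\<And>\<xi>. \<xi> \<in> I \<Longrightarrow> B \<xi> \<subseteq> {c \<xi><..}"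
    "disjoint_family_on B I"
    "\<And>\<xi> \<eta> a a'. \<xi> \<in> I \<Longrightarrow> \<eta> \<in> I \<Longrightarrow> a \<in> B \<xi> \<Longrightarrow> a' \<in> B \<eta> \<Longrightarrow> a < a' \<Longrightarrow> H a < a'"
proof -
  obtain B where B: "\<forall>\<xi>\<in>I. B \<xi> \<in> p \<xi>"
    and sep: "\<forall>\<xi>\<in>I. \<forall>\<eta>\<in>I. \<forall>a\<in>B \<xi>. \<forall>a'\<in>B \<eta>. (\<xi> \<noteq> \<eta> \<or> a \<noteq> a') \<longrightarrow> block_separated H a a'"
    using block_separated_sets[OF cI sel rk, where H = H] by blast
  show ?thesis
  proof
    show "B \<xi> \<inter> {c \<xi><..} \<in> p \<xi>" if "\<xi> \<in> I" for \<xi>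
      using B sel that selective_greaterThan selective_imp_ultrafilter ultrafilter_Int by blast
    show "disjoint_family_on (\<lambda>\<xi>. B \<xi> \<inter> {c \<xi><..}) I"
      unfolding disjoint_family_on_def
    proof (intro ballI impI equals0I)
      fix \<xi> \<eta> a assume "\<xi> \<in> I" "\<eta> \<in> I" "\<xi> \<noteq> \<eta>" "a \<in> (B \<xi> \<inter> {c \<xi><..}) \<inter> (B \<eta> \<inter> {c \<eta><..})"
      then have "block_separated H a a" using sep by blast
      then show False by (simp add: not_block_separated_self)
    qed
    show "H a < a'" if "\<xi> \<in> I" "\<eta> \<in> I" "a \<in> B \<xi> \<inter> {c \<xi><..}" "a' \<in> B \<eta> \<inter> {c \<eta><..}" "a < a'"
      for \<xi> \<eta> a a'
    proof -
      have "a \<noteq> a'" using that(5) by simp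
      then have "block_separated H a a'" using sep that(1-4) by blast
      then show ?thesis using that(5) by (rule block_separated_sparse)
    qed
  qed simp
qed

lemma enumerate_disjoint_family:
  fixes B :: "'i \<Rightarrow> nat set"
  assumes disj: "disjoint_family_on B I" and "I \<noteq> {}"
    and infinite_B: "\<And>\<xi>. \<xi> \<in> I \<Longrightarrow> infinite (B \<xi>)"
  obtains b :: "nat \<Rightarrow> nat" and r :: "nat \<Rightarrow> 'i"
  where "strict_mono b" "range r = I" "\<And>m. b m \<in> B (r m)"
    "\<And>\<xi>. \<xi> \<in> I \<Longrightarrow> b ` (r -` {\<xi>}) = B \<xi>"
proof -
  let ?X = "\<Union>\<xi>\<in>I. B \<xi>"
  obtain \<xi>\<^sub>0 where "\<xi>\<^sub>0 \<in> I" using \<open>I \<noteq> {}\<close> by blast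
  then have inf: "infinite ?X" using infinite_B by (meson UN_upper infinite_super)
  define b where "b = enumerate ?X"
  have b: "bij_betw b UNIV ?X" unfolding b_def using inf by (rule bij_enumerate)
  have unique: "\<exists>!\<xi>. \<xi> \<in> I \<and> b m \<in> B \<xi>" for m
    using bij_betw_apply[OF b UNIV_I, of m] disj unfolding disjoint_family_on_def by blast
  define r where "r m = (THE \<xi>. \<xi> \<in> I \<and> b m \<in> B \<xi>)" for m
  have r: "r m \<in> I" "b m \<in> B (r m)" for m
    using theI'[OF unique[of m]] unfolding r_def by blast+
  have r_eq: "r m = \<xi>" if "\<xi> \<in> I" "b m \<in> B \<xi>" for m \<xi>
    using unique[of m] r[of m] that by blast
  have preimage: "b ` (r -` {\<xi>}) = B \<xi>" if "\<xi> \<in> I" for \<xi>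
  proof
    show "b ` (r -` {\<xi>}) \<subseteq> B \<xi>"
    proof (rule image_subsetI)
      fix m assume "m \<in> r -` {\<xi>}"
      then have "r m = \<xi>" by simp
      then show "b m \<in> B \<xi>" using r(2)[of m] by simp
    qed
    show "B \<xi> \<subseteq> b ` (r -` {\<xi>})"
    proof
      fix a assume "a \<in> B \<xi>"
      then have "a \<in> b ` UNIV" using bij_betw_imp_surj_on[OF b] that by blast
      then obtain m where "a = b m" by blast
      then have "r m = \<xi>" using r_eq that \<open>a \<in> B \<xi>\<close> by blast
      with \<open>a = b m\<close> show "a \<in> b ` (r -` {\<xi>})" by blast
    qed
  qed
  have "strict_mono b" unfolding b_def using inf by (rule strict_mono_enumerate)
  moreover have "range r = I"
  proof
    show "range r \<subseteq> I" using r(1) by auto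
    show "I \<subseteq> range r"
    proof
      fix \<xi> assume "\<xi> \<in> I"
      then have "B \<xi> \<noteq> {}" using infinite_B[of \<xi>] by auto
      then have "b ` (r -` {\<xi>}) \<noteq> {}" using preimage[OF \<open>\<xi> \<in> I\<close>] by simp
      then show "\<xi> \<in> range r" by blast
    qed
  qed
  ultimately show ?thesis using r(2) preimage by (rule that)
qed

section \<open>The stages\<close>

locale injective_sequence =
  fixes y :: "nat \<Rightarrow> 'a"
  assumes inj_y: "inj y"
begin

definition seg_bound :: "'a set \<Rightarrow> nat" where
  "seg_bound S = (LEAST K. \<forall>n. y n \<in> S \<longrightarrow> n < 2 * K)"

definition seg_closure :: "'a set \<Rightarrow> 'a set" where
  "seg_closure S = S \<union> y ` {..<2 * seg_bound S}"

lemma seg_bound_exists: "finite S \<Longrightarrow> \<exists>K. \<forall>n. y n \<in> S \<longrightarrow> n < 2 * K"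
proof -
  assume "finite S"
  then have "finite (y -` S)" using inj_y by (simp add: finite_vimageI)
  then obtain K where "\<forall>n\<in>y -` S. n < K" using finite_nat_set_iff_bounded by blast
  then have "\<forall>n. y n \<in> S \<longrightarrow> n < 2 * K" by (metis vimageI2 mult_2 trans_less_add1)
  then show ?thesis ..
qed

lemma less_seg_bound: "finite S \<Longrightarrow> y n \<in> S \<Longrightarrow> n < 2 * seg_bound S"
  using LeastI_ex[OF seg_bound_exists] unfolding seg_bound_def by blast

lemma seg_bound_mono: "S \<subseteq> S' \<Longrightarrow> finite S' \<Longrightarrow> seg_bound S \<le> seg_bound S'"
  unfolding seg_bound_def[of S] using less_seg_bound[of S'] by (blast intro: Least_le)

lemma finite_seg_closure: "finite S \<Longrightarrow> finite (seg_closure S)"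
  unfolding seg_closure_def by simp

lemma subset_seg_closure: "S \<subseteq> seg_closure S"
  unfolding seg_closure_def by simp

lemma seg_closure_subset: "S \<subseteq> E \<Longrightarrow> range y \<subseteq> E \<Longrightarrow> seg_closure S \<subseteq> E"
  unfolding seg_closure_def by blast

lemma seg_closure_mono: "S \<subseteq> S' \<Longrightarrow> finite S' \<Longrightarrow> seg_closure S \<subseteq> seg_closure S'"
  using seg_bound_mono[of S S'] unfolding seg_closure_def by fastforce

lemma indices_in_seg_closure: "finite S \<Longrightarrow> {n. y n \<in> seg_closure S} = {..<2 * seg_bound S}"
  unfolding seg_closure_def using less_seg_bound inj_y by (auto simp: inj_eq)

lemma seg_bound_seg_closure: "finite S \<Longrightarrow> seg_bound (seg_closure S) = seg_bound S"
proof (rule antisym)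
  assume S: "finite S"
  show "seg_bound (seg_closure S) \<le> seg_bound S"
    unfolding seg_bound_def[of "seg_closure S"] using indices_in_seg_closure[OF S]
    by (intro Least_le) blast
  show "seg_bound S \<le> seg_bound (seg_closure S)"
    using S by (intro seg_bound_mono subset_seg_closure finite_seg_closure)
qed

end

locale stage_construction = injective_sequence y
  for y :: "nat \<Rightarrow> 'a" +
  fixes E I F :: "'a set" and k :: "'a \<Rightarrow> nat" and g :: "'a \<Rightarrow> nat \<Rightarrow> nat \<Rightarrow> 'a set"
    and d :: "'a \<Rightarrow> nat \<Rightarrow> 'a set" and e :: "nat \<Rightarrow> 'a"
  assumes countable_I: "countable I" and I_subset: "I \<subseteq> E"
    and F_subset: "F \<subseteq> E" and finite_F: "finite F"
    and g_finite_subset: "\<And>\<xi> n j. \<xi> \<in> I \<Longrightarrow> j < k \<xi> \<Longrightarrow> finite (g \<xi> n j) \<and> g \<xi> n j \<subseteq> E"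
    and g_indep: "\<And>\<xi>. \<xi> \<in> I \<Longrightarrow> lin_indep {(j, n). j < k \<xi>} (\<lambda>(j, n). g \<xi> n j)"
    and d_finite_subset: "\<And>\<xi> j. \<xi> \<in> I \<Longrightarrow> j < k \<xi> \<Longrightarrow> finite (d \<xi> j) \<and> d \<xi> j \<subseteq> E"
    and y_subset: "range y \<subseteq> E" and e_onto: "range e = E"
begin

definition indices_upto :: "nat \<Rightarrow> 'a set" where
  "indices_upto N = {\<xi> \<in> I. to_nat_on I \<xi> \<le> N}"

definition requested :: "nat \<Rightarrow> 'a set" where
  "requested N = indices_upto N \<union> (\<Union>\<xi>\<in>indices_upto N. \<Union>j<k \<xi>. d \<xi> j)"

definition g_images :: "nat \<Rightarrow> 'a set \<Rightarrow> 'a set" where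
  "g_images N S = (\<Union>\<xi>\<in>S \<inter> I. \<Union>n\<le>N. \<Union>j<k \<xi>. g \<xi> n j)"

definition extend :: "nat \<Rightarrow> nat \<Rightarrow> 'a set \<Rightarrow> 'a set" where
  "extend N m S = S \<union> g_images N S \<union> requested N \<union> {e m} \<union> y ` {..2 * seg_bound S}"

text \<open>The sets E_m of the theorem are stage N m for suitable N = N(m); the term
  y ` {..2 * seg_bound S} forces the even segments of y to grow strictly.\<close>
primrec stage :: "nat \<Rightarrow> nat \<Rightarrow> 'a set" where
  "stage N 0 = seg_closure (extend N 0 F)"
| "stage N (Suc m) = seg_closure (extend N (Suc m) (stage N m))"

lemma finite_indices_upto: "finite (indices_upto N)"
  using finite_to_nat_on_less[OF countable_I, of "Suc N"] unfolding indices_upto_def less_Suc_eq_le .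

lemma requested_finite_subset: "finite (requested N)" "requested N \<subseteq> E"
proof -
  have "finite (d \<xi> j) \<and> d \<xi> j \<subseteq> E" if "\<xi> \<in> indices_upto N" "j < k \<xi>" for \<xi> j
    using that d_finite_subset unfolding indices_upto_def by blast
  moreover have "indices_upto N \<subseteq> E" using I_subset unfolding indices_upto_def by blast
  ultimately show "finite (requested N)" "requested N \<subseteq> E"
    using finite_indices_upto unfolding requested_def by auto
qed

lemma g_images_finite_subset: "finite S \<Longrightarrow> finite (g_images N S)" "g_images N S \<subseteq> E"
  using g_finite_subset unfolding g_images_def by auto

lemma extend_finite_subset: "finite S \<Longrightarrow> finite (extend N m S)" "S \<subseteq> E \<Longrightarrow> extend N m S \<subseteq> E"
  unfolding extend_def using requested_finite_subset g_images_finite_subset y_subset e_onto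
  by auto

lemma extend_mono:
  assumes "N \<le> N'" "S \<subseteq> S'" "finite S'"
  shows "extend N m S \<subseteq> extend N' m S'"
proof -
  have "g_images N S \<subseteq> g_images N' S'" using assms unfolding g_images_def by fastforce
  moreover have "requested N \<subseteq> requested N'" using assms unfolding requested_def indices_upto_def by auto
  moreover have "seg_bound S \<le> seg_bound S'" using assms(2,3) by (rule seg_bound_mono)
  ultimately show ?thesis using assms unfolding extend_def by fastforce
qed

lemma stage_finite_subset: "finite (stage N m)" "stage N m \<subseteq> E"
  by (induction m)
    (simp_all add: F_subset finite_F extend_finite_subset finite_seg_closure seg_closure_subset
      y_subset)

lemma extend_subset_stage:
  "extend N 0 F \<subseteq> stage N 0" "extend N (Suc m) (stage N m) \<subseteq> stage N (Suc m)"
  by (simp_all add: subset_seg_closure)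

lemma stage_Suc_subset: "stage N m \<subseteq> stage N (Suc m)"
  using extend_subset_stage(2) unfolding extend_def Un_subset_iff by blast

lemma stage_mono: "m \<le> m' \<Longrightarrow> stage N m \<subseteq> stage N m'"
  using stage_Suc_subset by (rule lift_Suc_mono_le)

lemma stage_mono_index: "N \<le> N' \<Longrightarrow> stage N m \<subseteq> stage N' m"
  by (induction m)
    (simp_all add: seg_closure_mono extend_mono extend_finite_subset stage_finite_subset finite_F)

lemma F_subset_stage: "F \<subseteq> stage N 0"
  using extend_subset_stage(1) unfolding extend_def Un_subset_iff by blast

lemma e_in_stage: "e m \<in> stage N m"
  using extend_subset_stage unfolding extend_def Un_subset_iff insert_subset by (cases m) simp_all

lemma requested_subset_stage: "requested N \<subseteq> stage N m"
  using extend_subset_stage unfolding extend_def Un_subset_iff by (cases m) simp_all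

lemma g_images_subset_stage: "g_images N (stage N m) \<subseteq> stage N (Suc m)"
  using extend_subset_stage(2) unfolding extend_def Un_subset_iff by blast

lemma indices_in_stage: "{n. y n \<in> stage N m} = {..<2 * seg_bound (stage N m)}"
  by (cases m)
    (simp_all add: indices_in_seg_closure seg_bound_seg_closure extend_finite_subset
      stage_finite_subset finite_F)

lemma seg_bound_stage_less: "seg_bound (stage N m) < seg_bound (stage N (Suc m))"
proof -
  have "y ` {..2 * seg_bound (stage N m)} \<subseteq> stage N (Suc m)"
    using extend_subset_stage(2) unfolding extend_def Un_subset_iff by blast
  then have "2 * seg_bound (stage N m) \<in> {n. y n \<in> stage N (Suc m)}"
    by (simp add: image_subset_iff)
  then show ?thesis unfolding indices_in_stage by simp
qed

definition threshold :: "nat \<Rightarrow> nat" where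
  "threshold N = Max (insert 0 (\<Union>\<xi>\<in>indices_upto N. {n. \<not> indep_modulo (k \<xi>) (g \<xi> n) (stage N (Suc N))}))"

lemma indep_modulo_beyond_threshold:
  assumes "\<xi> \<in> indices_upto N" "threshold N < n"
  shows "indep_modulo (k \<xi>) (g \<xi> n) (stage N (Suc N))"
proof (rule ccontr)
  have "finite {n. \<not> indep_modulo (k \<eta>) (g \<eta> n) (stage N (Suc N))}" if "\<eta> \<in> indices_upto N" for \<eta>
    using that g_indep stage_finite_subset(1) finite_not_indep_modulo unfolding indices_upto_def by blast
  moreover assume "\<not> indep_modulo (k \<xi>) (g \<xi> n) (stage N (Suc N))"
  ultimately have "n \<le> threshold N"
    using assms(1) finite_indices_upto unfolding threshold_def by (intro Max_ge) auto
  with assms(2) show False by simp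
qed

context
  fixes b :: "nat \<Rightarrow> nat" and r :: "nat \<Rightarrow> 'a"
  assumes b_mono: "strict_mono b" and r_in_I: "\<And>m. r m \<in> I"
    and b_above: "\<And>m. threshold (to_nat_on I (r m)) + to_nat_on I (r m) < b m"
    and b_sparse: "\<And>m. threshold (b m) < b (Suc m)"
begin

text \<open>The index N(m) of the stage used for E_m: large enough to contain r m and to take
  the g-images at b (m - 1), yet with threshold below b m.\<close>
definition level :: "nat \<Rightarrow> nat" where
  "level m = max (case m of 0 \<Rightarrow> 0 | Suc m' \<Rightarrow> b m') (to_nat_on I (r m))"

definition stages :: "nat \<Rightarrow> 'a set" where
  "stages m = stage (level m) m"

lemma r_in_indices_upto_level: "r m \<in> indices_upto (level m)"
  using r_in_I unfolding indices_upto_def level_def by simp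

lemma b_le_level_Suc: "b m \<le> level (Suc m)"
  unfolding level_def by simp

lemma level_le_b: "level m \<le> b m"
proof -
  have "to_nat_on I (r m) < b m" using b_above[of m] by linarith
  moreover have "b m' < b m" if "m = Suc m'" for m' using b_mono that by (simp add: strict_mono_Suc_iff)
  ultimately show ?thesis unfolding level_def by (cases m) auto
qed

lemma le_Suc_level: "m \<le> Suc (level m)"
proof (cases m)
  case (Suc m')
  then show ?thesis using strict_mono_imp_increasing[OF b_mono, of m'] by (simp add: level_def)
qed simp

lemma threshold_level_less: "threshold (level m) < b m"
proof (cases m)
  case 0
  then show ?thesis using b_above[of 0] by (simp add: level_def)
next
  case (Suc m')
  then show ?thesis using b_above[of m] b_sparse[of m'] by (simp add: level_def max_def)
qed

lemma stages_subset_stage_Suc_level: "stages m \<subseteq> stage (level (Suc m)) m"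
  unfolding stages_def
  using level_le_b b_le_level_Suc by (intro stage_mono_index) (rule le_trans)

lemma stages_extend:
  "(\<Union>{g \<xi> (b m) j | \<xi> j. \<xi> \<in> stages m \<inter> I \<and> j < k \<xi>}) \<union> stages m \<subseteq> stages (Suc m)"
proof (rule Un_least)
  let ?S = "stage (level (Suc m)) m"
  have "(\<Union>{g \<xi> (b m) j | \<xi> j. \<xi> \<in> stages m \<inter> I \<and> j < k \<xi>}) \<subseteq> g_images (level (Suc m)) ?S"
  proof
    fix x assume "x \<in> \<Union>{g \<xi> (b m) j | \<xi> j. \<xi> \<in> stages m \<inter> I \<and> j < k \<xi>}"
    then obtain \<xi> j where "\<xi> \<in> stages m \<inter> I" "j < k \<xi>" "x \<in> g \<xi> (b m) j" by blast
    moreover have "\<xi> \<in> ?S \<inter> I" "b m \<in> {..level (Suc m)}"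
      using stages_subset_stage_Suc_level b_le_level_Suc calculation(1) by auto
    ultimately show "x \<in> g_images (level (Suc m)) ?S" unfolding g_images_def by blast
  qed
  then show "(\<Union>{g \<xi> (b m) j | \<xi> j. \<xi> \<in> stages m \<inter> I \<and> j < k \<xi>}) \<subseteq> stages (Suc m)"
    using g_images_subset_stage unfolding stages_def by (rule subset_trans)
  show "stages m \<subseteq> stages (Suc m)"
    using stages_subset_stage_Suc_level stage_Suc_subset unfolding stages_def by (rule subset_trans)
qed

lemma stages_lin_indep:
  "lin_indep (Inl ` {..<k (r m)} \<union> Inr ` stages m)
     (\<lambda>x. case x of Inl j \<Rightarrow> g (r m) (b m) j | Inr \<mu> \<Rightarrow> {\<mu>})"
proof (rule indep_modulo_imp_lin_indep)
  show "finite (stages m)" unfolding stages_def by (rule stage_finite_subset)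
  have "indep_modulo (k (r m)) (g (r m) (b m)) (stage (level m) (Suc (level m)))"
    using r_in_indices_upto_level threshold_level_less by (rule indep_modulo_beyond_threshold)
  then show "indep_modulo (k (r m)) (g (r m) (b m)) (stages m)"
    unfolding stages_def using stage_mono[OF le_Suc_level] by (rule indep_modulo_antimono[rotated])
qed

lemma strict_mono_seg_bound_stages: "strict_mono (\<lambda>m. seg_bound (stages m))"
proof (rule strict_mono_Suc_iff[THEN iffD2], rule allI)
  fix m
  have "seg_bound (stages m) \<le> seg_bound (stage (level (Suc m)) m)"
    using stages_subset_stage_Suc_level stage_finite_subset(1) by (rule seg_bound_mono)
  also have "\<dots> < seg_bound (stages (Suc m))"
    unfolding stages_def by (rule seg_bound_stage_less)
  finally show "seg_bound (stages m) < seg_bound (stages (Suc m))" .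
qed

lemma exhausting_stages:
  "\<exists>Es. (\<forall>i. finite (Es i) \<and> Es i \<subseteq> E) \<and> F \<subseteq> Es 0 \<and> E = (\<Union>i. Es i) \<and>
     (\<forall>m. r m \<in> Es m) \<and> (\<forall>m. (\<Union>j<k (r m). d (r m) j) \<subseteq> Es m) \<and>
     (\<forall>m. (\<Union>{g \<xi> (b m) j | \<xi> j. \<xi> \<in> Es m \<inter> I \<and> j < k \<xi>}) \<union> Es m \<subseteq> Es (Suc m)) \<and>
     (\<forall>m. lin_indep (Inl ` {..<k (r m)} \<union> Inr ` Es m)
            (\<lambda>x. case x of Inl j \<Rightarrow> g (r m) (b m) j | Inr \<mu> \<Rightarrow> {\<mu>})) \<and>
     (\<exists>N :: nat \<Rightarrow> nat. strict_mono N \<and> (\<forall>i. {n. y n \<in> Es i} = {..<2 * N i}))"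
proof (intro exI conjI allI)
  show "finite (stages i)" "stages i \<subseteq> E" for i unfolding stages_def by (rule stage_finite_subset)+
  show "F \<subseteq> stages 0" unfolding stages_def by (rule F_subset_stage)
  have "r m \<in> requested (level m)" "(\<Union>j<k (r m). d (r m) j) \<subseteq> requested (level m)" for m
    using r_in_indices_upto_level unfolding requested_def by blast+
  then show "r m \<in> stages m" "(\<Union>j<k (r m). d (r m) j) \<subseteq> stages m" for m
    unfolding stages_def using requested_subset_stage by blast+
  show "E = (\<Union>i. stages i)"
    using e_onto e_in_stage stage_finite_subset(2) unfolding stages_def by blast
  show "strict_mono (\<lambda>i. seg_bound (stages i))" by (rule strict_mono_seg_bound_stages)
  show "{n. y n \<in> stages i} = {..<2 * seg_bound (stages i)}" for i
    unfolding stages_def by (rule indices_in_stage)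
qed (use stages_extend stages_lin_indep in auto)

end

end

theorem mainTheorem5:
  fixes E I F :: "'a set"
    and k :: "'a \<Rightarrow> nat"
    and p :: "'a \<Rightarrow> nat set set"
    and g :: "'a \<Rightarrow> nat \<Rightarrow> nat \<Rightarrow> 'a set"
    and d :: "'a \<Rightarrow> nat \<Rightarrow> 'a set"
    and y :: "nat \<Rightarrow> 'a"
  assumes "countable E"
    and "I \<noteq> {}" and "I \<subseteq> E"
    and "F \<subseteq> E" and "finite F"
    and "\<forall>\<xi>\<in>I. selective_ultrafilter (p \<xi>)"
    and "\<forall>\<xi>\<in>I. \<forall>\<eta>\<in>I. \<xi> \<noteq> \<eta> \<longrightarrow> rk_incomparable (p \<xi>) (p \<eta>)"
    and "\<forall>\<xi>\<in>I. \<forall>m. \<forall>j<k \<xi>. finite (g \<xi> m j) \<and> g \<xi> m j \<subseteq> E"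
    and "\<forall>\<xi>\<in>I. lin_indep {(j, m). j < k \<xi>} (\<lambda>(j, m). g \<xi> m j)"
    and "\<forall>\<xi>\<in>I. \<forall>j<k \<xi>. finite (d \<xi> j) \<and> d \<xi> j \<subseteq> E"
    and "inj y" and "range y \<subseteq> E"
  shows "\<exists>(b :: nat \<Rightarrow> nat) (r :: nat \<Rightarrow> 'a) (Es :: nat \<Rightarrow> 'a set).
     strict_mono b \<and> range r = I \<and> (\<forall>i. finite (Es i) \<and> Es i \<subseteq> E) \<and>
     F \<subseteq> Es 0 \<and>
     E = (\<Union>i. Es i) \<and>
     (\<forall>m. r m \<in> Es m) \<and>
     (\<forall>m. (\<Union>j<k (r m). d (r m) j) \<subseteq> Es m) \<and>
     (\<forall>m. (\<Union>{g \<xi> (b m) j | \<xi> j. \<xi> \<in> Es m \<inter> I \<and> j < k \<xi>}) \<union> Es m \<subseteq> Es (Suc m)) \<and>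
     (\<forall>m. lin_indep (Inl ` {..<k (r m)} \<union> Inr ` Es m)
            (\<lambda>x. case x of Inl j \<Rightarrow> g (r m) (b m) j | Inr \<mu> \<Rightarrow> {\<mu>})) \<and>
     (\<forall>\<xi>\<in>I. b ` (r -` {\<xi>}) \<in> p \<xi>) \<and>
     (\<exists>N :: nat \<Rightarrow> nat. strict_mono N \<and> (\<forall>i. {n. y n \<in> Es i} = {..<2 * N i}))"
proof -
  have cI: "countable I" using assms(1,3) countable_subset by blast
  have "range (from_nat_into E) = E" using assms(1-3) by (intro range_from_nat_into) auto
  then interpret stage_construction y E I F k g d "from_nat_into E"
    using assms cI by unfold_locales auto
  let ?idx = "to_nat_on I"
  obtain B where B: "\<And>\<xi>. \<xi> \<in> I \<Longrightarrow> B \<xi> \<in> p \<xi>"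
    "\<And>\<xi>. \<xi> \<in> I \<Longrightarrow> B \<xi> \<subseteq> {threshold (?idx \<xi>) + ?idx \<xi><..}" "disjoint_family_on B I"
    and B_sparse: "\<And>\<xi> \<eta> a a'. \<xi> \<in> I \<Longrightarrow> \<eta> \<in> I \<Longrightarrow> a \<in> B \<xi> \<Longrightarrow> a' \<in> B \<eta> \<Longrightarrow> a < a' \<Longrightarrow>
      threshold a < a'"
    using sparse_disjoint_sets[OF cI assms(6,7),
        where c = "\<lambda>\<xi>. threshold (?idx \<xi>) + ?idx \<xi>" and H = threshold]
    by blast
  have B_infinite: "infinite (B \<xi>)" if "\<xi> \<in> I" for \<xi>
    using B(1)[OF that] assms(6) that selective_infinite by blast
  obtain b :: "nat \<Rightarrow> nat" and r :: "nat \<Rightarrow> 'a"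
    where b: "strict_mono b" "range r = I" "\<And>m. b m \<in> B (r m)"
      "\<And>\<xi>. \<xi> \<in> I \<Longrightarrow> b ` (r -` {\<xi>}) = B \<xi>"
    using enumerate_disjoint_family[OF B(3) assms(2) B_infinite] by blast
  have r_in_I: "r m \<in> I" for m using b(2) by blast
  have above: "threshold (?idx (r m)) + ?idx (r m) < b m" for m using B(2)[OF r_in_I] b(3) by blast
  have sparse: "threshold (b m) < b (Suc m)" for m
    using B_sparse[OF r_in_I r_in_I b(3) b(3)] b(1) by (simp add: strict_mono_Suc_iff)
  have "\<forall>\<xi>\<in>I. b ` (r -` {\<xi>}) \<in> p \<xi>" using b(4) B(1) by simp
  then show ?thesis using exhausting_stages[OF b(1) r_in_I above sparse] b(1,2) by blast
qed

end
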